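(* Let $\alpha,\beta>-1$, $p>0$, and \[W(x)=(1-x)^\alpha(1+x)^\beta\,\frac14\begin{pmatrix}4+2p+2px&2(1-x)\\2(1-x)&(1-x)^2\end{pmatrix},\qquad x\in(-1,1).\] Let $B_n,C_n$ be the $2\times2$ recurrence coefficients of the monic matrix orthogonal polynomials $P_n$ for $W$, i.e. $xP_n(x)=P_{n+1}(x)+B_nP_n(x)+C_nP_{n-1}(x)$ with $P_{-1}=0$, $P_0=I_2$. Then as $n\to\infty$, $B_n=\frac{\mathcal B_2}{n^2}+O(n^{-3})$ with \[\mathcal B_2=\frac14\begin{pmatrix}(\beta+1)^2-\alpha^2&0\\0&\beta^2-(\alpha+2)^2\end{pmatrix}-\frac{\alpha+1}{1+p}\begin{pmatrix}1&2p\\ \frac12&-1\end{pmatrix},\] and $C_n=\frac14I_2+O(n^{-2})$.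
   Context: The monic matrix orthogonal polynomial $P_n$ of degree $n$ for $W$ is the unique $2\times2$ matrix polynomial $P_n(x)=x^nI_2+\dots$ with $\int_{-1}^1P_n(x)W(x)P_m(x)^\ast dx=0$ for $m\ne n$. *)

theory Defs
  imports "HOL-Analysis.Analysis" "HOL-Computational_Algebra.Polynomial" "HOL-Library.Landau_Symbols"
begin

definition mpeval :: "real poly ^2^2 \<Rightarrow> real \<Rightarrow> real^2^2" where
  "mpeval Q x = (\<chi> i j. poly (Q$i$j) x)"

definition monic_mpoly :: "nat \<Rightarrow> real poly ^2^2 \<Rightarrow> bool" where
  "monic_mpoly n Q \<longleftrightarrow> (\<forall>i j. degree (Q$i$j) \<le> n \<and> coeff (Q$i$j) n = (if i = j then 1 else 0))"

definition weightW :: "real \<Rightarrow> real \<Rightarrow> real \<Rightarrow> real \<Rightarrow> real^2^2" where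
  "weightW \<alpha> \<beta> p x = ((1 - x) powr \<alpha> * (1 + x) powr \<beta> / 4) *\<^sub>R
     vector [vector [4 + 2*p + 2*p*x, 2*(1 - x)], vector [2*(1 - x), (1 - x)^2]]"

definition is_monic_MOPS :: "(real \<Rightarrow> real^2^2) \<Rightarrow> (nat \<Rightarrow> real poly ^2^2) \<Rightarrow> bool" where
  "is_monic_MOPS W P \<longleftrightarrow> (\<forall>n. monic_mpoly n (P n)) \<and>
     (\<forall>m n. m \<noteq> n \<longrightarrow>
        ((\<lambda>x. mpeval (P n) x ** W x ** transpose (mpeval (P m) x)) has_integral 0) {-1..1})"

end

theory Submission
  imports Defs "HOL-Real_Asymp.Real_Asymp"
begin

(* Write W = (\<omega>/4) M with \<omega>(x) = (1-x)^\<alpha> (1+x)^\<beta> the scalar Jacobi weight and M a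
   matrix polynomial, and put q = (\<alpha>+1)/(1+p).  The second-order operator
   D Q = (1-x^2) Q'' + Q' F1 + Q F0, acting from the right, is symmetric for the form
   <Q,R> = \<integral> Q M R^T \<omega>: entrywise, (DQ) M R^T - Q M (DR)^T has the shape
   (\<beta>-\<alpha>-(\<alpha>+\<beta>+2)x) h + (1-x^2) h', and the \<omega>-integral of such a polynomial vanishes
   (Pearson's equation).  D preserves degrees, and for monic Q of degree n the polynomial
   D Q - \<Gamma>_n Q has lower degree for an explicit constant matrix \<Gamma>_n; so symmetry,
   orthogonality and positive definiteness of the form force D P_n = \<Gamma>_n P_n.  Comparing
   the two coefficients X_n, Y_n of P_n below the leading one gives triangular linear
   systems, solved by explicit rational functions of n.  The three-term recurrence gives B_n = X_n - X_{n+1} and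
   C_n = Y_n - Y_{n+1} - B_n X_n, and second-order expansions in 1/n of the explicit
   solutions give the asymptotics. *)

section \<open>Pearson's equation for the Jacobi weight\<close>

definition jacobi_weight :: "real \<Rightarrow> real \<Rightarrow> real \<Rightarrow> real" where
  "jacobi_weight a b x = (1 - x) powr a * (1 + x) powr b"

lemma jacobi_pearson_integral:
  fixes a b :: real and h :: "real poly"
  assumes a: "a > -1" and b: "b > -1"
  shows "((\<lambda>x. jacobi_weight a b x * poly ([:b-a, -(a+b+2):] * h + [:1,0,-1:] * pderiv h) x)
           has_integral 0) {-1..1}"
proof -
  define G where "G x = (1-x) powr (a+1) * (1+x) powr (b+1) * poly h x" for x
  have cont: "continuous_on {-1..1} G" unfolding G_def
    by (intro continuous_intros continuous_on_powr') (use a b in auto)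
  have der: "(G has_vector_derivative
      (jacobi_weight a b x * poly ([:b-a, -(a+b+2):] * h + [:1,0,-1:] * pderiv h) x)) (at x)"
    if x: "x \<in> {-1<..<1}" for x
  proof -
    have x1: "1 - x > 0" "1 + x > 0" using x by auto
    have d1: "((\<lambda>x. (1-x) powr (a+1)) has_real_derivative (a+1) * (1-x) powr (a+1 - of_nat 1) * (-1)) (at x)"
      by (rule DERIV_fun_powr) (use x1 in \<open>auto intro!: derivative_eq_intros\<close>)
    have d2: "((\<lambda>x. (1+x) powr (b+1)) has_real_derivative (b+1) * (1+x) powr (b+1 - of_nat 1) * 1) (at x)"
      by (rule DERIV_fun_powr) (use x1 in \<open>auto intro!: derivative_eq_intros\<close>)
    have dG: "(G has_real_derivative
        ((a+1) * (1-x) powr a * (-1)) * (1+x) powr (b+1) * poly h x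
       + (1-x) powr (a+1) * ((b+1) * (1+x) powr b * 1) * poly h x
       + (1-x) powr (a+1) * (1+x) powr (b+1) * poly (pderiv h) x) (at x)"
      unfolding G_def using DERIV_mult[OF DERIV_mult[OF d1 d2] poly_DERIV] by (simp add: algebra_simps)
    have e1: "(1-x) powr (a+1) = (1-x) * (1-x) powr a" using x1 by (simp add: powr_add)
    have e2: "(1+x) powr (b+1) = (1+x) * (1+x) powr b" using x1 by (simp add: powr_add)
    have "((a+1) * (1-x) powr a * (-1)) * (1+x) powr (b+1) * poly h x
       + (1-x) powr (a+1) * ((b+1) * (1+x) powr b * 1) * poly h x
       + (1-x) powr (a+1) * (1+x) powr (b+1) * poly (pderiv h) x
       = jacobi_weight a b x * poly ([:b-a, -(a+b+2):] * h + [:1,0,-1:] * pderiv h) x"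
      unfolding e1 e2 jacobi_weight_def by (simp add: algebra_simps)
    with dG show ?thesis by (simp add: has_real_derivative_iff_has_vector_derivative[symmetric])
  qed
  have "((\<lambda>x. jacobi_weight a b x * poly ([:b-a, -(a+b+2):] * h + [:1,0,-1:] * pderiv h) x)
          has_integral (G 1 - G (-1))) {-1..1}"
    by (rule fundamental_theorem_of_calculus_interior) (use cont der in auto)
  moreover have "G 1 = 0" "G (-1) = 0" unfolding G_def using a b by auto
  ultimately show ?thesis by simp
qed

lemma has_integral_zero_nonneg_imp_zero:
  fixes f :: "real \<Rightarrow> real"
  assumes cont: "continuous_on {a<..<b} f" and nonneg: "\<And>x. x \<in> {a..b} \<Longrightarrow> 0 \<le> f x"
    and int: "(f has_integral 0) {a..b}" and x: "x \<in> {a<..<b}"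
  shows "f x = 0"
proof -
  define c where "c = (a + x) / 2"
  define d where "d = (x + b) / 2"
  have cd: "a < c" "c < x" "x < d" "d < b" using x unfolding c_def d_def by auto
  have sub: "{c..d} \<subseteq> {a..b}" and sub_open: "{c..d} \<subseteq> {a<..<b}" using cd by auto
  have "f integrable_on {c..d}"
    using integrable_subinterval_real[OF has_integral_integrable[OF int] sub] .
  then have hi: "(f has_integral integral {c..d} f) {c..d}" by (rule integrable_integral)
  have "integral {c..d} f \<le> 0" using has_integral_subset_le[OF sub hi int] nonneg by auto
  moreover have "integral {c..d} f \<ge> 0" using has_integral_nonneg[OF hi] nonneg sub by auto
  ultimately have zero: "(f has_integral 0) (cbox c d)" using hi by simp
  have "continuous_on (cbox c d) f" using continuous_on_subset[OF cont sub_open] by simp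
  from has_integral_0_cbox_imp_0[OF this _ zero] show "f x = 0"
    using cd nonneg sub by auto
qed

section \<open>Matrix polynomials\<close>

definition const_mpoly :: "real^2^2 \<Rightarrow> real poly^2^2" where
  "const_mpoly A = (\<chi> i j. [:A$i$j:])"

definition mcoeff :: "real poly^2^2 \<Rightarrow> nat \<Rightarrow> real^2^2" where
  "mcoeff Q m = (\<chi> i j. coeff (Q$i$j) m)"

definition mdegree_less :: "nat \<Rightarrow> real poly^2^2 \<Rightarrow> bool" where
  "mdegree_less k Q \<longleftrightarrow> (\<forall>m\<ge>k. mcoeff Q m = 0)"

definition mpderiv :: "real poly^2^2 \<Rightarrow> real poly^2^2" where
  "mpderiv Q = (\<chi> i j. pderiv (Q$i$j))"

lemma transpose_add: "transpose (A + B) = transpose A + transpose B"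
  by (simp add: transpose_def vec_eq_iff)

lemma matrix_diff_rdistrib: "((B::'a::ring_1^_^_) - C) ** A = B ** A - C ** A"
  by (simp add: matrix_matrix_mult_def vec_eq_iff sum_subtractf left_diff_distrib)

lemma mpeval_add: "mpeval (A + B) x = mpeval A x + mpeval B x"
  by (simp add: mpeval_def vec_eq_iff)

lemma mpeval_mult: "mpeval (A ** B) x = mpeval A x ** mpeval B x"
  by (simp add: mpeval_def matrix_matrix_mult_def vec_eq_iff poly_sum)

lemma mpeval_transpose: "mpeval (transpose A) x = transpose (mpeval A x)"
  by (simp add: mpeval_def transpose_def vec_eq_iff)

lemma mpeval_const_mpoly: "mpeval (const_mpoly A) x = A"
  by (simp add: mpeval_def const_mpoly_def vec_eq_iff)

lemma mpeval_inject: "(\<And>x. mpeval A x = mpeval B x) \<Longrightarrow> A = B"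
  by (simp add: mpeval_def vec_eq_iff poly_eq_poly_eq_iff[symmetric] fun_eq_iff)

lemma mcoeff_add: "mcoeff (A + B) m = mcoeff A m + mcoeff B m"
  by (simp add: mcoeff_def vec_eq_iff)

lemma mcoeff_diff: "mcoeff (A - B) m = mcoeff A m - mcoeff B m"
  by (simp add: mcoeff_def vec_eq_iff)

lemma mcoeff_const_mpoly_mult: "mcoeff (const_mpoly A ** Q) m = A ** mcoeff Q m"
  by (simp add: mcoeff_def const_mpoly_def matrix_matrix_mult_def vec_eq_iff coeff_sum)

lemma transpose_const_mpoly_mult:
  "transpose (const_mpoly A ** Q) = transpose Q ** const_mpoly (transpose A)"
  unfolding matrix_transpose_mul by (simp add: const_mpoly_def transpose_def vec_eq_iff)

lemma monic_mpoly_mdegree_less: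
  assumes "monic_mpoly n Q" shows "mdegree_less (Suc n) Q"
proof -
  have "degree (Q$i$j) < m" if "Suc n \<le> m" for i j m
    using assms that unfolding monic_mpoly_def by (metis Suc_le_eq le_less_trans)
  then show ?thesis unfolding mdegree_less_def mcoeff_def by (simp add: vec_eq_iff coeff_eq_0)
qed

lemma monic_mpoly_mcoeff: "monic_mpoly n Q \<Longrightarrow> mcoeff Q n = mat 1"
  unfolding monic_mpoly_def mcoeff_def mat_def by (simp add: vec_eq_iff)

lemma mdegree_less_0: "mdegree_less 0 Q \<longleftrightarrow> Q = 0"
  by (auto simp: mdegree_less_def mcoeff_def vec_eq_iff poly_eq_iff)

section \<open>Orthogonality against the Jacobi weight\<close>

definition weight_matrix :: "real \<Rightarrow> real poly^2^2" where
  "weight_matrix p = vector [vector [[:4+2*p, 2*p:], [:2,-2:]], vector [[:2,-2:], [:1,-2,1:]]]"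

definition jacobi_null :: "real \<Rightarrow> real \<Rightarrow> real poly^2^2 \<Rightarrow> bool" where
  "jacobi_null a b G \<longleftrightarrow>
     (\<forall>i j. ((\<lambda>x. jacobi_weight a b x * poly (G$i$j) x) has_integral 0) {-1..1})"

lemma weightW_eq: "weightW a b p x = (jacobi_weight a b x / 4) *\<^sub>R mpeval (weight_matrix p) x"
  by (simp add: weightW_def jacobi_weight_def mpeval_def weight_matrix_def vec_eq_iff forall_2
      algebra_simps power2_eq_square)

lemma jacobi_null_zero: "jacobi_null a b 0"
  unfolding jacobi_null_def by simp

lemma jacobi_null_add: "jacobi_null a b G \<Longrightarrow> jacobi_null a b H \<Longrightarrow> jacobi_null a b (G + H)"
  unfolding jacobi_null_def by (auto simp: distrib_left intro!: has_integral_add[where k=0 and l=0, simplified])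

lemma jacobi_null_diff: "jacobi_null a b G \<Longrightarrow> jacobi_null a b H \<Longrightarrow> jacobi_null a b (G - H)"
  unfolding jacobi_null_def by (auto simp: right_diff_distrib intro!: has_integral_diff[where k=0 and l=0, simplified])

lemma jacobi_null_const_mpoly_mult:
  assumes "jacobi_null a b G" shows "jacobi_null a b (const_mpoly A ** G)"
  unfolding jacobi_null_def
proof (intro allI)
  fix i j :: 2
  have h: "((\<lambda>x. jacobi_weight a b x * poly (G$k$j) x) has_integral 0) {-1..1}" for k
    using assms jacobi_null_def by blast
  have "((\<lambda>x. A$i$1 * (jacobi_weight a b x * poly (G$1$j) x)
           + A$i$2 * (jacobi_weight a b x * poly (G$2$j) x)) has_integral 0) {-1..1}"
    using has_integral_add[OF has_integral_mult_right[OF h] has_integral_mult_right[OF h]] by simp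
  then show "((\<lambda>x. jacobi_weight a b x * poly ((const_mpoly A ** G) $ i $ j) x) has_integral 0) {-1..1}"
    by (simp add: const_mpoly_def matrix_matrix_mult_def sum_2 algebra_simps)
qed

lemma jacobi_null_mult_const_mpoly:
  assumes "jacobi_null a b G" shows "jacobi_null a b (G ** const_mpoly A)"
  unfolding jacobi_null_def
proof (intro allI)
  fix i j :: 2
  have h: "((\<lambda>x. jacobi_weight a b x * poly (G$i$k) x) has_integral 0) {-1..1}" for k
    using assms jacobi_null_def by blast
  have "((\<lambda>x. A$1$j * (jacobi_weight a b x * poly (G$i$1) x)
           + A$2$j * (jacobi_weight a b x * poly (G$i$2) x)) has_integral 0) {-1..1}"
    using has_integral_add[OF has_integral_mult_right[OF h] has_integral_mult_right[OF h]] by simp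
  then show "((\<lambda>x. jacobi_weight a b x * poly ((G ** const_mpoly A) $ i $ j) x) has_integral 0) {-1..1}"
    by (simp add: const_mpoly_def matrix_matrix_mult_def sum_2 algebra_simps)
qed

lemma jacobi_null_if_orthogonal:
  assumes "((\<lambda>x. mpeval Q x ** weightW a b p x ** transpose (mpeval R x)) has_integral 0) {-1..1}"
  shows "jacobi_null a b (Q ** weight_matrix p ** transpose R)"
  unfolding jacobi_null_def
proof (intro allI)
  fix i j :: 2
  have integrand: "mpeval Q x ** weightW a b p x ** transpose (mpeval R x)
      = (jacobi_weight a b x / 4) *\<^sub>R mpeval (Q ** weight_matrix p ** transpose R) x" for x
    unfolding weightW_eq mpeval_mult mpeval_transpose by (simp add: matrix_scalar_ac scalar_matrix_assoc)
  have "((\<lambda>x. jacobi_weight a b x / 4 * poly ((Q ** weight_matrix p ** transpose R) $ i $ j) x)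
          has_integral 0) {-1..1}"
    using has_integral_linear[OF assms[unfolded integrand], of "\<lambda>A. A $ i $ j"]
    by (simp add: o_def mpeval_def bounded_linear_compose[OF bounded_linear_vec_nth bounded_linear_vec_nth])
  from has_integral_mult_right[OF this, of 4]
  show "((\<lambda>x. jacobi_weight a b x * poly ((Q ** weight_matrix p ** transpose R) $ i $ j) x)
          has_integral 0) {-1..1}"
    by simp
qed

lemma monic_mops_orthogonal_lower_degree:
  assumes mops: "is_monic_MOPS (weightW a b p) P"
  shows "mdegree_less k R \<Longrightarrow> k \<le> n \<Longrightarrow> jacobi_null a b (P n ** weight_matrix p ** transpose R)"
proof (induction k arbitrary: R)
  case 0
  then show ?case by (simp add: mdegree_less_0 jacobi_null_zero transpose_def zero_vec_def[symmetric])
next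
  case (Suc k)
  have monic: "monic_mpoly k (P k)" using mops unfolding is_monic_MOPS_def by blast
  define A where "A = mcoeff R k"
  define R' where "R' = R - const_mpoly A ** P k"
  have "mdegree_less k R'"
    unfolding mdegree_less_def
  proof (intro allI impI)
    fix m assume "k \<le> m"
    then consider "m = k" | "Suc k \<le> m" by linarith
    then show "mcoeff R' m = 0"
    proof cases
      case 1
      then show ?thesis by (simp add: R'_def A_def mcoeff_diff mcoeff_const_mpoly_mult monic_mpoly_mcoeff[OF monic])
    next
      case 2
      then have "mcoeff R m = 0" "mcoeff (P k) m = 0"
        using Suc.prems(1) monic_mpoly_mdegree_less[OF monic] unfolding mdegree_less_def by auto
      then show ?thesis by (simp add: R'_def mcoeff_diff mcoeff_const_mpoly_mult)
    qed
  qed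
  with Suc have rest: "jacobi_null a b (P n ** weight_matrix p ** transpose R')" by simp
  have "((\<lambda>x. mpeval (P n) x ** weightW a b p x ** transpose (mpeval (P k) x)) has_integral 0) {-1..1}"
    using mops Suc.prems(2) unfolding is_monic_MOPS_def by auto
  from jacobi_null_mult_const_mpoly[OF jacobi_null_if_orthogonal[OF this]]
  have leading: "jacobi_null a b (P n ** weight_matrix p ** transpose (const_mpoly A ** P k))"
    unfolding transpose_const_mpoly_mult matrix_mul_assoc .
  have "R = R' + const_mpoly A ** P k" unfolding R'_def by simp
  then have "P n ** weight_matrix p ** transpose R
      = P n ** weight_matrix p ** transpose R' + P n ** weight_matrix p ** transpose (const_mpoly A ** P k)"
    by (simp only: transpose_add matrix_add_ldistrib)
  then show ?case using jacobi_null_add[OF rest leading] by simp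
qed

lemma poly_eq_0_if_zero_on_Ioo:
  fixes f :: "real poly"
  assumes "c < d" and "\<And>x. x \<in> {c<..<d} \<Longrightarrow> poly f x = 0"
  shows "f = 0"
proof (rule ccontr)
  assume "f \<noteq> 0"
  then have "finite {x. poly f x = 0}" by (rule poly_roots_finite)
  moreover have "{c<..<d} \<subseteq> {x. poly f x = 0}" using assms(2) by auto
  ultimately have "finite {c<..<d}" by (rule finite_subset[rotated])
  with assms(1) show False using infinite_Ioo_iff[of c d] by simp
qed

lemma weight_matrix_definite:
  assumes p: "p > 0" and null: "jacobi_null a b (G ** weight_matrix p ** transpose G)"
  shows "G = 0"
proof -
  have "G$i$1 = 0 \<and> G$i$2 = 0" for i
  proof -
    define g where "g = (G ** weight_matrix p ** transpose G)$i$i"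
    have sos: "poly g x = (2 * poly (G$i$1) x + (1-x) * poly (G$i$2) x)^2
                          + 2*p*(1+x) * (poly (G$i$1) x)^2" for x
      unfolding g_def
      by (simp add: matrix_matrix_mult_def sum_2 transpose_def weight_matrix_def algebra_simps power2_eq_square)
    have int: "((\<lambda>x. jacobi_weight a b x * poly g x) has_integral 0) {-1..1}"
      using null unfolding jacobi_null_def g_def by blast
    have cont: "continuous_on {-1<..<1} (\<lambda>x. jacobi_weight a b x * poly g x)"
      unfolding jacobi_weight_def by (intro continuous_intros) auto
    have nonneg: "0 \<le> jacobi_weight a b x * poly g x" if "x \<in> {-1..1}" for x
      using p that unfolding jacobi_weight_def sos by (auto intro!: mult_nonneg_nonneg add_nonneg_nonneg)
    have vanish: "poly (G$i$1) x = 0 \<and> poly (G$i$2) x = 0" if x: "x \<in> {-1<..<1}" for x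
    proof -
      have "jacobi_weight a b x * poly g x = 0"
        by (rule has_integral_zero_nonneg_imp_zero[OF cont nonneg int x])
      moreover have "jacobi_weight a b x > 0" using x unfolding jacobi_weight_def by auto
      ultimately have g0: "poly g x = 0" by simp
      have "2*p*(1+x) * (poly (G$i$1) x)^2 \<ge> 0" using x p by auto
      then have "2*p*(1+x) * (poly (G$i$1) x)^2 = 0"
        and "(2 * poly (G$i$1) x + (1-x) * poly (G$i$2) x)^2 = 0"
        using g0 unfolding sos by (smt (verit) zero_le_power2)+
      then show ?thesis using x p by auto
    qed
    have "G$i$1 = 0" "G$i$2 = 0"
      by (rule poly_eq_0_if_zero_on_Ioo[of "-1" 1], simp, use vanish in blast)+
    then show ?thesis ..
  qed
  then show ?thesis unfolding vec_eq_iff forall_2 by simp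
qed

section \<open>A symmetric second-order differential operator\<close>

definition op_first_coeff :: "real \<Rightarrow> real \<Rightarrow> real poly^2^2" where
  "op_first_coeff a b = vector [vector [[:b-a+1, -(a+b+3):], [:-2:]], vector [0, [:b-a-2, -(a+b+4):]]]"

definition op_zero_coeff :: "real \<Rightarrow> real \<Rightarrow> real poly^2^2" where
  "op_zero_coeff b q = vector [vector [[:b+1+q:], 0], vector [[:q:], 0]]"

text \<open>The operator acts from the right, so it commutes with left multiplication by constant
  matrices.\<close>

definition diff_op :: "real \<Rightarrow> real \<Rightarrow> real \<Rightarrow> real poly^2^2 \<Rightarrow> real poly^2^2" where
  "diff_op a b q Q = (\<chi> i j. [:1,0,-1:] * pderiv (pderiv (Q$i$j)))
     + mpderiv Q ** op_first_coeff a b + Q ** op_zero_coeff b q"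

definition symmetry_skew :: "real poly^2^2" where
  "symmetry_skew = vector [vector [0, [:-2:]], vector [[:2:], 0]]"

lemma diff_op_symmetry_identity:
  fixes a b p q :: real and Q R :: "real poly^2^2"
  assumes aq: "a = q*(p+1) - 1"
  defines "H \<equiv> mpderiv Q ** weight_matrix p ** transpose R - Q ** weight_matrix p ** transpose (mpderiv R)
                - Q ** symmetry_skew ** transpose R"
  shows "(diff_op a b q Q ** weight_matrix p ** transpose R
            - Q ** weight_matrix p ** transpose (diff_op a b q R))$i$j
         = [:b-a, -(a+b+2):] * H$i$j + [:1,0,-1:] * pderiv (H$i$j)"
  unfolding poly_eq_poly_eq_iff[symmetric] fun_eq_iff H_def
  by (simp add: diff_op_def mpderiv_def weight_matrix_def symmetry_skew_def op_first_coeff_def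
      op_zero_coeff_def matrix_matrix_mult_def sum_2 transpose_def pderiv_add pderiv_diff
      pderiv_mult pderiv_pCons pderiv_smult pderiv_minus) (unfold aq, algebra)

lemma diff_op_symmetric:
  assumes "a = q*(p+1) - 1" and "a > -1" and "b > -1"
  shows "jacobi_null a b (diff_op a b q Q ** weight_matrix p ** transpose R
                          - Q ** weight_matrix p ** transpose (diff_op a b q R))"
  unfolding jacobi_null_def diff_op_symmetry_identity[OF assms(1)]
  using jacobi_pearson_integral[OF assms(2,3)] by blast

definition eigenvalue_matrix :: "real \<Rightarrow> real \<Rightarrow> real \<Rightarrow> nat \<Rightarrow> real^2^2" where
  "eigenvalue_matrix a b q m = (-(real m * (real m - 1))) *\<^sub>R mat 1
     + real m *\<^sub>R mcoeff (op_first_coeff a b) 1 + mcoeff (op_zero_coeff b q) 0"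

lemma coeff_one_minus_sq_mult_pderiv2:
  "coeff ([:1,0,-1:] * pderiv (pderiv f)) m
   = real (Suc m) * real (Suc (Suc m)) * coeff f (Suc (Suc m)) - real m * (real m - 1) * coeff (f::real poly) m"
proof (cases m)
  case (Suc k)
  then show ?thesis by (cases k) (simp_all add: coeff_pderiv algebra_simps)
qed (simp add: coeff_pderiv)

lemma coeff_pderiv_mult_linear:
  "coeff (pderiv f * [:c0, c1:]) m = c0 * real (Suc m) * coeff (f::real poly) (Suc m) + c1 * real m * coeff f m"
  by (cases m) (simp_all add: coeff_pderiv mult.commute[of _ "[:c0, c1:]"] algebra_simps)

lemma mcoeff_diff_op:
  "mcoeff (diff_op a b q Q) m = mcoeff Q m ** eigenvalue_matrix a b q m
     + real (Suc m) *\<^sub>R (mcoeff Q (Suc m) ** mcoeff (op_first_coeff a b) 0)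
     + (real (Suc m) * real (Suc (Suc m))) *\<^sub>R mcoeff Q (Suc (Suc m))"
proof -
  have F1: "op_first_coeff a b $ 1 $ 1 = [:b-a+1, -(a+b+3):]" "op_first_coeff a b $ 1 $ 2 = [:-2, 0:]"
    "op_first_coeff a b $ 2 $ 1 = [:0, 0:]" "op_first_coeff a b $ 2 $ 2 = [:b-a-2, -(a+b+4):]"
    by (simp_all add: op_first_coeff_def)
  have F0: "op_zero_coeff b q $ 1 $ 1 = [:b+1+q:]" "op_zero_coeff b q $ 1 $ 2 = [:0:]"
    "op_zero_coeff b q $ 2 $ 1 = [:q:]" "op_zero_coeff b q $ 2 $ 2 = [:0:]"
    by (simp_all add: op_zero_coeff_def)
  show ?thesis
    unfolding vec_eq_iff forall_2
    by (simp only: mcoeff_def vec_lambda_beta diff_op_def mpderiv_def matrix_matrix_mult_def sum_2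
        vector_add_component F1 F0 coeff_add coeff_one_minus_sq_mult_pderiv2 coeff_pderiv_mult_linear
        mult.commute[of "f::real poly" "[:c:]" for f c] coeff_smult)
      (simp add: mcoeff_def eigenvalue_matrix_def op_first_coeff_def op_zero_coeff_def mat_def
        matrix_matrix_mult_def sum_2 coeff_pderiv algebra_simps)
qed

lemma mdegree_less_diff_op: "mdegree_less k Q \<Longrightarrow> mdegree_less k (diff_op a b q Q)"
  unfolding mdegree_less_def mcoeff_diff_op by simp

lemma diff_op_monic:
  assumes monic: "monic_mpoly n Q"
  shows "mdegree_less n (diff_op a b q Q - const_mpoly (eigenvalue_matrix a b q n) ** Q)"
  unfolding mdegree_less_def
proof (intro allI impI)
  fix m assume "n \<le> m"
  have "mcoeff Q k = 0" if "Suc n \<le> k" for k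
    using monic_mpoly_mdegree_less[OF monic] that unfolding mdegree_less_def by auto
  with \<open>n \<le> m\<close> show "mcoeff (diff_op a b q Q - const_mpoly (eigenvalue_matrix a b q n) ** Q) m = 0"
    unfolding mcoeff_diff mcoeff_diff_op mcoeff_const_mpoly_mult
    by (cases "m = n") (simp_all add: monic_mpoly_mcoeff[OF monic])
qed

lemma monic_mops_eigen:
  assumes mops: "is_monic_MOPS (weightW a b p) P"
    and aq: "a = q*(p+1) - 1" and a: "a > -1" and b: "b > -1" and p: "p > 0"
  shows "diff_op a b q (P n) = const_mpoly (eigenvalue_matrix a b q n) ** P n"
proof -
  have monic: "monic_mpoly n (P n)" using mops unfolding is_monic_MOPS_def by blast
  define \<Gamma> where "\<Gamma> = const_mpoly (eigenvalue_matrix a b q n)"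
  define Z where "Z = diff_op a b q (P n) - \<Gamma> ** P n"
  have "jacobi_null a b (Z ** weight_matrix p ** transpose R)" if R: "mdegree_less n R" for R
  proof -
    have "jacobi_null a b (diff_op a b q (P n) ** weight_matrix p ** transpose R
                           - P n ** weight_matrix p ** transpose (diff_op a b q R))"
      by (rule diff_op_symmetric[OF aq a b])
    moreover have "jacobi_null a b (P n ** weight_matrix p ** transpose (diff_op a b q R))"
      by (rule monic_mops_orthogonal_lower_degree[OF mops mdegree_less_diff_op[OF R] order_refl])
    moreover have "jacobi_null a b (\<Gamma> ** (P n ** weight_matrix p ** transpose R))"
      unfolding \<Gamma>_def
      by (rule jacobi_null_const_mpoly_mult[OF monic_mops_orthogonal_lower_degree[OF mops R order_refl]])
    moreover have "Z ** weight_matrix p ** transpose R =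
       (diff_op a b q (P n) ** weight_matrix p ** transpose R
        - P n ** weight_matrix p ** transpose (diff_op a b q R))
       + P n ** weight_matrix p ** transpose (diff_op a b q R)
       - \<Gamma> ** (P n ** weight_matrix p ** transpose R)"
      unfolding Z_def matrix_diff_rdistrib matrix_mul_assoc by simp
    ultimately show ?thesis by (metis jacobi_null_add jacobi_null_diff)
  qed
  from this[OF diff_op_monic[OF monic]] have "Z = 0"
    unfolding Z_def \<Gamma>_def by (rule weight_matrix_definite[OF p])
  then show ?thesis unfolding Z_def \<Gamma>_def by simp
qed

section \<open>The subleading coefficients\<close>

definition eigenvalue11 :: "real \<Rightarrow> real \<Rightarrow> real \<Rightarrow> real \<Rightarrow> real" where
  "eigenvalue11 a b q t = -t*(t-1) - t*(a+b+3) + b+1+q"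

definition eigenvalue22 :: "real \<Rightarrow> real \<Rightarrow> real \<Rightarrow> real" where
  "eigenvalue22 a b t = -t*(t-1) - t*(a+b+4)"

lemma eigenvalue_matrix_entries:
  "eigenvalue_matrix a b q m $ 1 $ 1 = eigenvalue11 a b q (real m)"
  "eigenvalue_matrix a b q m $ 1 $ 2 = 0"
  "eigenvalue_matrix a b q m $ 2 $ 1 = q"
  "eigenvalue_matrix a b q m $ 2 $ 2 = eigenvalue22 a b (real m)"
  by (simp_all add: eigenvalue_matrix_def eigenvalue11_def eigenvalue22_def mcoeff_def
      op_first_coeff_def op_zero_coeff_def mat_def algebra_simps)

lemma op_first_coeff_0_entries:
  "mcoeff (op_first_coeff a b) 0 $ 1 $ 1 = b-a+1" "mcoeff (op_first_coeff a b) 0 $ 1 $ 2 = -2"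
  "mcoeff (op_first_coeff a b) 0 $ 2 $ 1 = 0" "mcoeff (op_first_coeff a b) 0 $ 2 $ 2 = b-a-2"
  by (simp_all add: mcoeff_def op_first_coeff_def)

lemma mat_1_entries:
  "(mat 1 :: real^2^2) $ 1 $ 1 = 1" "(mat 1 :: real^2^2) $ 1 $ 2 = 0"
  "(mat 1 :: real^2^2) $ 2 $ 1 = 0" "(mat 1 :: real^2^2) $ 2 $ 2 = 1"
  by (simp_all add: mat_def)

lemmas coeff_eq_entries = eigenvalue_matrix_entries op_first_coeff_0_entries mat_1_entries

lemma eigen_mcoeff:
  assumes "diff_op a b q Q = const_mpoly (eigenvalue_matrix a b q n) ** Q"
  shows "mcoeff Q m ** eigenvalue_matrix a b q m
           + real (Suc m) *\<^sub>R (mcoeff Q (Suc m) ** mcoeff (op_first_coeff a b) 0)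
           + (real (Suc m) * real (Suc (Suc m))) *\<^sub>R mcoeff Q (Suc (Suc m))
         = eigenvalue_matrix a b q n ** mcoeff Q m"
  using arg_cong[OF assms, of "\<lambda>Q. mcoeff Q m"] by (simp add: mcoeff_diff_op mcoeff_const_mpoly_mult)

lemma subleading_coeff_eqs:
  assumes eigen: "diff_op a b q Q = const_mpoly (eigenvalue_matrix a b q (Suc k)) ** Q"
    and monic: "monic_mpoly (Suc k) Q"
  defines "x \<equiv> mcoeff Q k" and "t \<equiv> real (Suc k)"
  shows "x$1$2 * eigenvalue22 a b (t-1) - 2*t = eigenvalue11 a b q t * x$1$2"
    "x$1$1 * eigenvalue11 a b q (t-1) + x$1$2 * q + t*(b-a+1) = eigenvalue11 a b q t * x$1$1"
    "x$2$2 * eigenvalue22 a b (t-1) + t*(b-a-2) = q * x$1$2 + eigenvalue22 a b t * x$2$2"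
    "x$2$1 * eigenvalue11 a b q (t-1) + x$2$2 * q = q * x$1$1 + eigenvalue22 a b t * x$2$1"
  using eigen_mcoeff[OF eigen, of k] monic_mpoly_mcoeff[OF monic]
    monic_mpoly_mdegree_less[OF monic, unfolded mdegree_less_def]
  unfolding vec_eq_iff forall_2 x_def t_def
  by (simp_all add: matrix_matrix_mult_def sum_2 coeff_eq_entries algebra_simps)

lemma second_subleading_coeff_eqs:
  assumes eigen: "diff_op a b q Q = const_mpoly (eigenvalue_matrix a b q (Suc (Suc k))) ** Q"
    and monic: "monic_mpoly (Suc (Suc k)) Q"
  defines "x \<equiv> mcoeff Q (Suc k)" and "y \<equiv> mcoeff Q k" and "t \<equiv> real (Suc (Suc k))"
  shows "y$1$2 * eigenvalue22 a b (t-2) + (t-1)*(-2*x$1$1 + x$1$2*(b-a-2))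
           = eigenvalue11 a b q t * y$1$2"
    "y$1$1 * eigenvalue11 a b q (t-2) + y$1$2*q + (t-1)*(x$1$1*(b-a+1)) + t*(t-1)
           = eigenvalue11 a b q t * y$1$1"
    "y$2$2 * eigenvalue22 a b (t-2) + (t-1)*(-2*x$2$1 + x$2$2*(b-a-2)) + t*(t-1)
           = q*y$1$2 + eigenvalue22 a b t * y$2$2"
    "y$2$1 * eigenvalue11 a b q (t-2) + y$2$2*q + (t-1)*(x$2$1*(b-a+1))
           = q*y$1$1 + eigenvalue22 a b t * y$2$1"
  using eigen_mcoeff[OF eigen, of k] monic_mpoly_mcoeff[OF monic]
  unfolding vec_eq_iff forall_2 x_def y_def t_def
  by (simp_all add: matrix_matrix_mult_def sum_2 coeff_eq_entries algebra_simps)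

text \<open>The solutions are written in terms of constants, \<open>1/n\<close> and \<open>inv_lin\<close> only, so that
  their expansions in \<open>1/n\<close> follow from the closure rules for \<open>expansion2\<close> below.
  The entries \<open>Y11\<close>, \<open>Y22\<close>, \<open>Y21\<close> grow linearly in \<open>n\<close> and are given divided by \<open>n\<close>.\<close>

definition inv_lin :: "real \<Rightarrow> real \<Rightarrow> nat \<Rightarrow> real" where
  "inv_lin c d n = 1 / (c + d / real n)"

definition X12 :: "real \<Rightarrow> real \<Rightarrow> nat \<Rightarrow> real" where
  "X12 a q n = 2 * inv_lin 1 (a+1-q) n"

definition X11 :: "real \<Rightarrow> real \<Rightarrow> real \<Rightarrow> nat \<Rightarrow> real" where
  "X11 a b q n = -((b-a+1) + q * X12 a q n * (1 / real n)) * inv_lin 2 (a+b+1) n"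

definition X22 :: "real \<Rightarrow> real \<Rightarrow> real \<Rightarrow> nat \<Rightarrow> real" where
  "X22 a b q n = (q * X12 a q n * (1 / real n) - (b-a-2)) * inv_lin 2 (a+b+2) n"

definition X21 :: "real \<Rightarrow> real \<Rightarrow> real \<Rightarrow> nat \<Rightarrow> real" where
  "X21 a b q n = q * (X11 a b q n - X22 a b q n) * (1 / real n) * inv_lin 3 (a+2*b+2+q) n"

definition Y12 :: "real \<Rightarrow> real \<Rightarrow> real \<Rightarrow> nat \<Rightarrow> real" where
  "Y12 a b q n = -((1 - 1 / real n) * (-2 * X11 a b q n + (b-a-2) * X12 a q n))
                 * inv_lin 3 (2*a+b+1-q) n"

definition Y11_div_n :: "real \<Rightarrow> real \<Rightarrow> real \<Rightarrow> nat \<Rightarrow> real" where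
  "Y11_div_n a b q n = -((1 - 1 / real n) * ((b-a+1) * X11 a b q n * (1 / real n) + 1)
     + q * Y12 a b q n * (1 / real n) * (1 / real n)) * inv_lin 4 (2*(a+b)) n"

definition Y22_div_n :: "real \<Rightarrow> real \<Rightarrow> real \<Rightarrow> nat \<Rightarrow> real" where
  "Y22_div_n a b q n = (q * Y12 a b q n * (1 / real n) * (1 / real n)
     - (1 - 1 / real n) * ((-2 * X21 a b q n + (b-a-2) * X22 a b q n) * (1 / real n) + 1))
     * inv_lin 4 (2*(a+b)+2) n"

definition Y21_div_n :: "real \<Rightarrow> real \<Rightarrow> real \<Rightarrow> nat \<Rightarrow> real" where
  "Y21_div_n a b q n = (q * (Y11_div_n a b q n - Y22_div_n a b q n) * (1 / real n)
     - (1 - 1 / real n) * (b-a+1) * X21 a b q n * (1 / real n)) * inv_lin 5 (2*(a+b)+b+1+q) n"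

lemma inv_lin_solve:
  assumes eq: "x * (c * real n + d) = real n * r" and n: "n > 0" and pos: "c * real n + d > 0"
  shows "x = r * inv_lin c d n"
proof -
  have "c + d / real n = (c * real n + d) / real n" using n by (simp add: field_simps)
  then show ?thesis using pos n eq unfolding inv_lin_def by (simp add: field_simps)
qed

lemma subleading_coeff_solution:
  fixes a b q x11 x12 x21 x22 :: real and n :: nat
  assumes a: "a > -1" and b: "b > -1" and q: "q > 0" "q < a + 1" and n: "n \<ge> 1"
  defines "t \<equiv> real n"
  assumes e12: "x12 * eigenvalue22 a b (t-1) - 2*t = eigenvalue11 a b q t * x12"
    and e11: "x11 * eigenvalue11 a b q (t-1) + x12 * q + t*(b-a+1) = eigenvalue11 a b q t * x11"
    and e22: "x22 * eigenvalue22 a b (t-1) + t*(b-a-2) = q * x12 + eigenvalue22 a b t * x22"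
    and e21: "x21 * eigenvalue11 a b q (t-1) + x22 * q = q * x11 + eigenvalue22 a b t * x21"
  shows "x12 = X12 a q n" "x11 = X11 a b q n" "x22 = X22 a b q n" "x21 = X21 a b q n"
proof -
  have t: "t \<ge> 1" using n unfolding t_def by simp
  note solve = inv_lin_solve[where n=n, folded t_def]
  have n0: "n > 0" using n by simp
  from e12 have "x12 * (1 * t + (a+1-q)) = t * 2"
    by (simp add: eigenvalue11_def eigenvalue22_def algebra_simps)
  from solve[OF this n0] t q show x12: "x12 = X12 a q n"
    unfolding X12_def by simp
  from e11 have "x11 * (2*t + (a+b+1)) = -(t*(b-a+1) + q*x12)"
    by (simp add: eigenvalue11_def algebra_simps)
  also have "\<dots> = t * -((b-a+1) + q * x12 * (1 / t))" using t by (simp add: field_simps)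
  finally show x11: "x11 = X11 a b q n"
    unfolding X11_def x12[symmetric] t_def[symmetric] by (rule solve) (use n0 t a b q in simp_all) 
  from e22 have "x22 * (2*t + (a+b+2)) = q*x12 - t*(b-a-2)"
    by (simp add: eigenvalue22_def algebra_simps)
  also have "\<dots> = t * (q * x12 * (1 / t) - (b-a-2))" using t by (simp add: field_simps)
  finally show x22: "x22 = X22 a b q n"
    unfolding X22_def x12[symmetric] t_def[symmetric] by (rule solve) (use n0 t a b q in simp_all) 
  from e21 have "x21 * (3*t + (a+2*b+2+q)) = q*(x11 - x22)"
    by (simp add: eigenvalue11_def eigenvalue22_def algebra_simps)
  also have "\<dots> = t * (q * (x11 - x22) * (1 / t))" using t by (simp add: field_simps)
  finally show "x21 = X21 a b q n"
    unfolding X21_def x11[symmetric] x22[symmetric] t_def[symmetric]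
    by (rule solve) (use n0 t a b q in simp_all) 
qed

lemma second_subleading_coeff_solution:
  fixes a b q y11 y12 y21 y22 :: real and n :: nat
  assumes a: "a > -1" and b: "b > -1" and q: "q > 0" "q < a + 1" and n: "n \<ge> 2"
  defines "t \<equiv> real n" and "x11 \<equiv> X11 a b q n" and "x12 \<equiv> X12 a q n"
    and "x21 \<equiv> X21 a b q n" and "x22 \<equiv> X22 a b q n"
  assumes f12: "y12 * eigenvalue22 a b (t-2) + (t-1)*(-2*x11 + x12*(b-a-2)) = eigenvalue11 a b q t * y12"
    and f11: "y11 * eigenvalue11 a b q (t-2) + y12*q + (t-1)*(x11*(b-a+1)) + t*(t-1)
              = eigenvalue11 a b q t * y11"
    and f22: "y22 * eigenvalue22 a b (t-2) + (t-1)*(-2*x21 + x22*(b-a-2)) + t*(t-1)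
              = q*y12 + eigenvalue22 a b t * y22"
    and f21: "y21 * eigenvalue11 a b q (t-2) + y22*q + (t-1)*(x21*(b-a+1)) = q*y11 + eigenvalue22 a b t * y21"
  shows "y12 = Y12 a b q n" "y11 = t * Y11_div_n a b q n" "y22 = t * Y22_div_n a b q n"
    "y21 = t * Y21_div_n a b q n"
proof -
  have t: "t \<ge> 2" using n unfolding t_def by simp
  note solve = inv_lin_solve[where n=n, folded t_def]
  have n0: "n > 0" using n by simp
  from f12 have "y12 * (3*t + (2*a+b+1-q)) = -((t-1)*(-2*x11 + (b-a-2)*x12))"
    by (simp add: eigenvalue11_def eigenvalue22_def algebra_simps)
  also have "\<dots> = t * -((1 - 1 / t) * (-2 * x11 + (b-a-2) * x12))" using t by (simp add: field_simps)
  finally show y12: "y12 = Y12 a b q n"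
    unfolding Y12_def x11_def[symmetric] x12_def[symmetric] t_def[symmetric]
    by (rule solve) (use n0 t a b q in simp_all) 
  from f11 have "y11 * (4*t + 2*(a+b)) = -(q*y12 + (t-1)*(x11*(b-a+1)) + t*(t-1))"
    by (simp add: eigenvalue11_def algebra_simps)
  also have "\<dots> = t * (t * -((1 - 1 / t) * ((b-a+1) * x11 * (1 / t) + 1) + q * y12 * (1 / t) * (1 / t)))"
    using t by (simp add: field_simps)
  finally show y11: "y11 = t * Y11_div_n a b q n"
    unfolding Y11_div_n_def y12[symmetric] x11_def[symmetric] t_def[symmetric]
    by (subst mult.assoc[symmetric], rule solve) (use n0 t a b q in simp_all)
  from f22 have "y22 * (4*t + (2*(a+b)+2)) = q*y12 - (t-1)*(-2*x21 + (b-a-2)*x22) - t*(t-1)"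
    by (simp add: eigenvalue22_def algebra_simps)
  also have "\<dots> = t * (t * (q * y12 * (1 / t) * (1 / t)
                  - (1 - 1 / t) * ((-2 * x21 + (b-a-2) * x22) * (1 / t) + 1)))"
    using t by (simp add: field_simps)
  finally show y22: "y22 = t * Y22_div_n a b q n"
    unfolding Y22_div_n_def y12[symmetric] x21_def[symmetric] x22_def[symmetric] t_def[symmetric]
    by (subst mult.assoc[symmetric], rule solve) (use n0 t a b q in simp_all)
  from f21 have "y21 * (5*t + (2*(a+b)+b+1+q)) = q*y11 - q*y22 - (t-1)*(x21*(b-a+1))"
    by (simp add: eigenvalue11_def eigenvalue22_def algebra_simps)
  also have "\<dots> = t * (t * (q * (Y11_div_n a b q n - Y22_div_n a b q n) * (1 / t)
                  - (1 - 1 / t) * (b-a+1) * x21 * (1 / t)))"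
    unfolding y11 y22 using t by (simp add: field_simps)
  finally show "y21 = t * Y21_div_n a b q n"
    unfolding Y21_div_n_def x21_def[symmetric] t_def[symmetric]
    by (subst mult.assoc[symmetric], rule solve) (use n0 t a b q in simp_all)
qed

section \<open>Second-order expansions in \<open>1/n\<close>\<close>

definition expansion2 :: "(nat \<Rightarrow> real) \<Rightarrow> real \<Rightarrow> real \<Rightarrow> real \<Rightarrow> bool" where
  "expansion2 f c0 c1 c2 \<longleftrightarrow> (\<lambda>n. f n - (c0 + c1 / real n + c2 / real n ^ 2)) \<in> O(\<lambda>n. 1 / real n ^ 3)"

lemma bigo_const_div_power:
  assumes "k \<le> m" shows "(\<lambda>n::nat. c / real n ^ m) \<in> O(\<lambda>n. 1 / real n ^ k)"
proof (rule bigoI[of _ "\<bar>c\<bar>"])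
  have "\<bar>c / real n ^ m\<bar> \<le> \<bar>c\<bar> * \<bar>1 / real n ^ k\<bar>" if "n \<ge> 1" for n
  proof -
    have "real n ^ k \<le> real n ^ m" using that assms by (intro power_increasing) auto
    then have "1 / real n ^ m \<le> 1 / real n ^ k" using that by (intro frac_le) auto
    then have "\<bar>c\<bar> * (1 / real n ^ m) \<le> \<bar>c\<bar> * (1 / real n ^ k)" by (rule mult_left_mono) simp
    then show ?thesis by (simp add: abs_divide)
  qed
  then show "\<forall>\<^sub>F n in sequentially. norm (c / real n ^ m) \<le> \<bar>c\<bar> * norm (1 / real n ^ k)"
    unfolding eventually_sequentially real_norm_def by blast
qed

lemma bigo_shift:
  assumes "f \<in> O(\<lambda>n. 1 / real n ^ k)" shows "(\<lambda>n. f (Suc n)) \<in> O(\<lambda>n. 1 / real n ^ k)"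
proof -
  have "(\<lambda>n. f (Suc n)) \<in> O(\<lambda>n. 1 / real (Suc n) ^ k)"
    using landau_o.big.compose[OF assms filterlim_Suc] .
  moreover have "(\<lambda>n. 1 / real (Suc n) ^ k) \<in> O(\<lambda>n. 1 / real n ^ k)"
    by (intro landau_o.big_mono eventually_sequentiallyI[of 1]) (auto intro!: divide_left_mono power_mono)
  ultimately show ?thesis by (rule landau_o.big_trans)
qed

lemma expansion2_main_part_bounded: "(\<lambda>n::nat. c0 + c1 / real n + c2 / real n ^ 2) \<in> O(\<lambda>n. 1)"
  using bigo_const_div_power[of 0 1 c1] bigo_const_div_power[of 0 2 c2] by (intro sum_in_bigo) auto

lemma bigo_inverse_power_bounded: "(\<lambda>n::nat. 1 / real n ^ k) \<in> O(\<lambda>n. 1)"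
  using bigo_const_div_power[of 0 k 1] by simp

lemma expansion2_bounded:
  assumes "expansion2 f c0 c1 c2" shows "f \<in> O(\<lambda>n. 1)"
proof -
  have "(\<lambda>n. f n - (c0 + c1 / real n + c2 / real n ^ 2)) \<in> O(\<lambda>n. 1)"
    using landau_o.big_trans[OF assms[unfolded expansion2_def] bigo_inverse_power_bounded] .
  from sum_in_bigo(1)[OF this expansion2_main_part_bounded[of c0 c1 c2]] show ?thesis by simp
qed

lemma expansion2_exI: "expansion2 f c0 c1 c2 \<Longrightarrow> c0 = d0 \<Longrightarrow> c1 = d1 \<Longrightarrow> \<exists>c2. expansion2 f d0 d1 c2"
  by auto

lemma expansion2_const: "expansion2 (\<lambda>n. c) c 0 0"
  unfolding expansion2_def by simp

lemma expansion2_inverse: "expansion2 (\<lambda>n. 1 / real n) 0 1 0"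
  unfolding expansion2_def by simp

lemma expansion2_add:
  "expansion2 f a0 a1 a2 \<Longrightarrow> expansion2 g b0 b1 b2
     \<Longrightarrow> expansion2 (\<lambda>n. f n + g n) (a0+b0) (a1+b1) (a2+b2)"
  unfolding expansion2_def by (drule (1) sum_in_bigo(1)) (simp add: algebra_simps add_divide_distrib)

lemma expansion2_diff:
  "expansion2 f a0 a1 a2 \<Longrightarrow> expansion2 g b0 b1 b2
     \<Longrightarrow> expansion2 (\<lambda>n. f n - g n) (a0-b0) (a1-b1) (a2-b2)"
  unfolding expansion2_def by (drule (1) sum_in_bigo(2)) (simp add: algebra_simps diff_divide_distrib)

lemma expansion2_minus: "expansion2 f a0 a1 a2 \<Longrightarrow> expansion2 (\<lambda>n. - f n) (-a0) (-a1) (-a2)"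
  using expansion2_diff[OF expansion2_const[of 0]] by simp

lemma expansion2_mult:
  assumes f: "expansion2 f a0 a1 a2" and g: "expansion2 g b0 b1 b2"
  shows "expansion2 (\<lambda>n. f n * g n) (a0*b0) (a0*b1 + a1*b0) (a0*b2 + a1*b1 + a2*b0)"
proof -
  define F where "F n = a0 + a1 / real n + a2 / real n ^ 2" for n
  define G where "G n = b0 + b1 / real n + b2 / real n ^ 2" for n
  have ef: "(\<lambda>n. f n - F n) \<in> O(\<lambda>n. 1 / real n ^ 3)" using f unfolding expansion2_def F_def .
  have eg: "(\<lambda>n. g n - G n) \<in> O(\<lambda>n. 1 / real n ^ 3)" using g unfolding expansion2_def G_def .
  have F: "F \<in> O(\<lambda>n. 1)" and G: "G \<in> O(\<lambda>n. 1)"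
    unfolding F_def G_def by (rule expansion2_main_part_bounded)+
  have "(\<lambda>n. g n - G n) \<in> O(\<lambda>n. 1)"
    using landau_o.big_trans[OF eg bigo_inverse_power_bounded] .
  then have "(\<lambda>n. (f n - F n) * (g n - G n) + (f n - F n) * G n + F n * (g n - G n)
      + ((a1*b2 + a2*b1) / real n ^ 3 + (a2*b2) / real n ^ 4)) \<in> O(\<lambda>n. 1 / real n ^ 3)"
    using landau_o.big.mult[OF ef] landau_o.big.mult[OF ef G] landau_o.big.mult[OF F eg]
    by (intro sum_in_bigo bigo_const_div_power) auto
  moreover have "(f n - F n) * (g n - G n) + (f n - F n) * G n + F n * (g n - G n)
      + ((a1*b2 + a2*b1) / real n ^ 3 + (a2*b2) / real n ^ 4)
      = f n * g n - (a0*b0 + (a0*b1 + a1*b0) / real n + (a0*b2 + a1*b1 + a2*b0) / real n ^ 2)" for n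
    unfolding F_def G_def
    by (cases "n = 0") (simp_all add: field_simps power2_eq_square power3_eq_cube power4_eq_xxxx)
  ultimately show ?thesis unfolding expansion2_def by simp
qed

lemma expansion2_inv_lin:
  assumes c: "c \<noteq> 0"
  shows "expansion2 (inv_lin c d) (1/c) (-d/c^2) (d^2/c^3)"
proof -
  have den: "(\<lambda>n. c + d / real n) \<longlonglongrightarrow> c"
    using tendsto_add[OF tendsto_const lim_const_over_n] by simp
  then have lim: "inv_lin c d \<longlonglongrightarrow> 1 / c"
    unfolding inv_lin_def[abs_def] using c by (intro tendsto_intros)
  have "\<forall>\<^sub>F n in sequentially. - (d^3 / c^3) * inv_lin c d n
      = (inv_lin c d n - (1/c + (-d/c^2) / real n + (d^2/c^3) / real n ^ 2)) / (1 / real n ^ 3)"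
    using tendsto_imp_eventually_ne[OF den c] eventually_gt_at_top[of 0]
  proof eventually_elim
    case (elim n)
    then have inv: "inv_lin c d n * (c * real n + d) = real n"
      unfolding inv_lin_def by (simp add: field_simps)
    show ?case
      using elim(2) c by (simp add: field_simps power2_eq_square power3_eq_cube, insert inv, algebra)
  qed
  with tendsto_mult[OF tendsto_const lim, of "- (d^3 / c^3)"]
  have "(\<lambda>n. (inv_lin c d n - (1/c + (-d/c^2) / real n + (d^2/c^3) / real n ^ 2)) / (1 / real n ^ 3))
          \<longlonglongrightarrow> - (d^3 / c^3) * (1 / c)"
    by (rule Lim_transform_eventually)
  then show ?thesis unfolding expansion2_def
    by (rule bigoI_tendsto) (simp add: eventually_mono[OF eventually_gt_at_top[of 0]])
qed

lemma expansion2_forward_difference: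
  assumes "expansion2 f c0 c1 c2"
  shows "(\<lambda>n. f n - f (Suc n) - c1 / real n ^ 2) \<in> O(\<lambda>n. 1 / real n ^ 3)"
proof -
  define e where "e n = f n - (c0 + c1 / real n + c2 / real n ^ 2)" for n
  have e: "e \<in> O(\<lambda>n. 1 / real n ^ 3)" using assms unfolding expansion2_def e_def .
  have "(\<lambda>n::nat. 1 / real n - 1 / real (Suc n) - 1 / real n ^ 2) \<in> O(\<lambda>n. 1 / real n ^ 3)"
    and "(\<lambda>n::nat. 1 / real n ^ 2 - 1 / real (Suc n) ^ 2) \<in> O(\<lambda>n. 1 / real n ^ 3)"
    by real_asymp+
  then have "(\<lambda>n. e n - e (Suc n) + c1 * (1 / real n - 1 / real (Suc n) - 1 / real n ^ 2)
        + c2 * (1 / real n ^ 2 - 1 / real (Suc n) ^ 2)) \<in> O(\<lambda>n. 1 / real n ^ 3)"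
    using e bigo_shift[OF e] by (intro sum_in_bigo) auto
  moreover have "e n - e (Suc n) + c1 * (1 / real n - 1 / real (Suc n) - 1 / real n ^ 2)
        + c2 * (1 / real n ^ 2 - 1 / real (Suc n) ^ 2) = f n - f (Suc n) - c1 / real n ^ 2" for n
    by (simp add: e_def algebra_simps)
  ultimately show ?thesis by simp
qed

lemma expansion2_difference:
  assumes "expansion2 f c0 c1 c2" shows "(\<lambda>n. f n - f (Suc n)) \<in> O(\<lambda>n. 1 / real n ^ 2)"
proof -
  have "(\<lambda>n. f n - f (Suc n) - c1 / real n ^ 2) \<in> O(\<lambda>n. 1 / real n ^ 2)"
    using landau_o.big_trans[OF expansion2_forward_difference[OF assms] bigo_const_div_power[of 2 3 1]]
    by simp
  from sum_in_bigo(1)[OF this bigo_const_div_power[of 2 2 c1]] show ?thesis by simp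
qed

lemma expansion2_weighted_difference:
  assumes "expansion2 f c0 c1 c2"
  shows "(\<lambda>n. real n * f n - real (Suc n) * f (Suc n) + c0) \<in> O(\<lambda>n. 1 / real n ^ 2)"
proof -
  define e where "e n = f n - (c0 + c1 / real n + c2 / real n ^ 2)" for n
  have e: "e \<in> O(\<lambda>n. 1 / real n ^ 3)" using assms unfolding expansion2_def e_def .
  have "(\<lambda>n. real n * (1 / real n ^ 3)) \<in> O(\<lambda>n. 1 / real n ^ 2)" by real_asymp
  with landau_o.big.mult_left[OF e] have ne: "(\<lambda>n. real n * e n) \<in> O(\<lambda>n. 1 / real n ^ 2)"
    by (rule landau_o.big_trans)
  have "(\<lambda>n::nat. 1 / real n - 1 / real (Suc n)) \<in> O(\<lambda>n. 1 / real n ^ 2)" by real_asymp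
  then have main: "(\<lambda>n. real n * e n - real (Suc n) * e (Suc n) + c2 * (1 / real n - 1 / real (Suc n)))
               \<in> O(\<lambda>n. 1 / real n ^ 2)"
    using ne bigo_shift[OF ne] by (intro sum_in_bigo) auto
  have ne_eq: "real m * e m = real m * f m - c0 * real m - c1 - c2 / real m" if "m > 0" for m
    using that by (simp add: e_def field_simps power2_eq_square)
  have "\<forall>\<^sub>F n in sequentially.
      real n * e n - real (Suc n) * e (Suc n) + c2 * (1 / real n - 1 / real (Suc n))
      = real n * f n - real (Suc n) * f (Suc n) + c0"
    using eventually_gt_at_top[of 0]
  proof eventually_elim
    case (elim n)
    with ne_eq[of n] ne_eq[of "Suc n"] show ?case by (simp add: algebra_simps)
  qed
  from landau_o.big.in_cong[OF this] main show ?thesis by (rule iffD1)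
qed

lemmas expansion2_intros = expansion2_const expansion2_inverse expansion2_add expansion2_diff
  expansion2_minus expansion2_mult expansion2_inv_lin

lemma expansion2_X12: "\<exists>c2. expansion2 (X12 a q) 2 (-2*(a+1-q)) c2"
  unfolding X12_def[abs_def]
  by (rule expansion2_exI, (rule expansion2_intros one_neq_zero numeral_neq_zero)+) simp_all

lemma expansion2_X11: "\<exists>c2. expansion2 (X11 a b q) (-(b-a+1)/2) (((b+1)^2 - a^2)/4 - q) c2"
proof -
  obtain c12 where X12: "expansion2 (X12 a q) 2 (-2*(a+1-q)) c12"
    using expansion2_X12 by blast
  show ?thesis unfolding X11_def[abs_def]
    by (rule expansion2_exI, (rule expansion2_intros X12 one_neq_zero numeral_neq_zero)+)
      (simp_all add: field_simps power2_eq_square)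
qed

lemma expansion2_X22: "\<exists>c2. expansion2 (X22 a b q) (-(b-a-2)/2) ((b^2 - (a+2)^2)/4 + q) c2"
proof -
  obtain c12 where X12: "expansion2 (X12 a q) 2 (-2*(a+1-q)) c12"
    using expansion2_X12 by blast
  show ?thesis unfolding X22_def[abs_def]
    by (rule expansion2_exI, (rule expansion2_intros X12 one_neq_zero numeral_neq_zero)+)
      (simp_all add: field_simps power2_eq_square)
qed

lemma expansion2_X21: "\<exists>c2. expansion2 (X21 a b q) 0 (-q/2) c2"
proof -
  obtain c11 c22 where X11: "expansion2 (X11 a b q) (-(b-a+1)/2) (((b+1)^2 - a^2)/4 - q) c11"
    and X22: "expansion2 (X22 a b q) (-(b-a-2)/2) ((b^2 - (a+2)^2)/4 + q) c22"
    using expansion2_X11 expansion2_X22 by blast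
  show ?thesis unfolding X21_def[abs_def]
    by (rule expansion2_exI,
        (rule expansion2_intros X11 X22 one_neq_zero numeral_neq_zero)+)
      (simp_all add: field_simps)
qed

lemma expansion2_Y12: "\<exists>c0 c1 c2. expansion2 (Y12 a b q) c0 c1 c2"
proof -
  obtain c11 c12 where X11: "expansion2 (X11 a b q) (-(b-a+1)/2) (((b+1)^2 - a^2)/4 - q) c11"
    and X12: "expansion2 (X12 a q) 2 (-2*(a+1-q)) c12"
    using expansion2_X11 expansion2_X12 by blast
  show ?thesis unfolding Y12_def[abs_def]
    by (intro exI) (rule expansion2_intros X11 X12 one_neq_zero numeral_neq_zero)+
qed

lemma expansion2_Y11_div_n: "\<exists>c1 c2. expansion2 (Y11_div_n a b q) (-1/4) c1 c2"
proof -
  obtain c11 where X11: "expansion2 (X11 a b q) (-(b-a+1)/2) (((b+1)^2 - a^2)/4 - q) c11"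
    using expansion2_X11 by blast
  obtain d0 d1 d2 where Y12: "expansion2 (Y12 a b q) d0 d1 d2"
    using expansion2_Y12 by blast
  show ?thesis unfolding Y11_div_n_def[abs_def]
    by (rule exI, rule expansion2_exI,
        (rule expansion2_intros X11 Y12 one_neq_zero numeral_neq_zero)+)
      simp_all
qed

lemma expansion2_Y22_div_n: "\<exists>c1 c2. expansion2 (Y22_div_n a b q) (-1/4) c1 c2"
proof -
  obtain c21 c22 where X21: "expansion2 (X21 a b q) 0 (-q/2) c21"
    and X22: "expansion2 (X22 a b q) (-(b-a-2)/2) ((b^2 - (a+2)^2)/4 + q) c22"
    using expansion2_X21 expansion2_X22 by blast
  obtain d0 d1 d2 where Y12: "expansion2 (Y12 a b q) d0 d1 d2"
    using expansion2_Y12 by blast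
  show ?thesis unfolding Y22_div_n_def[abs_def]
    by (rule exI, rule expansion2_exI,
        (rule expansion2_intros X21 X22 Y12 one_neq_zero numeral_neq_zero)+)
      simp_all
qed

lemma expansion2_Y21_div_n: "\<exists>c1 c2. expansion2 (Y21_div_n a b q) 0 c1 c2"
proof -
  obtain c21 where X21: "expansion2 (X21 a b q) 0 (-q/2) c21"
    using expansion2_X21 by blast
  obtain u1 u2 v1 v2 where Y11: "expansion2 (Y11_div_n a b q) (-1/4) u1 u2"
    and Y22: "expansion2 (Y22_div_n a b q) (-1/4) v1 v2"
    using expansion2_Y11_div_n expansion2_Y22_div_n by blast
  show ?thesis unfolding Y21_div_n_def[abs_def]
    by (rule exI, rule expansion2_exI,
        (rule expansion2_intros X21 Y11 Y22 one_neq_zero numeral_neq_zero)+)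
      simp_all
qed

lemma expansion2_subleading:
  obtains c11 c12 c21 c22
  where "expansion2 (X11 a b q) (-(b-a+1)/2) (((b+1)^2 - a^2)/4 - q) c11"
    and "expansion2 (X12 a q) 2 (-2*(a+1-q)) c12"
    and "expansion2 (X21 a b q) 0 (-q/2) c21"
    and "expansion2 (X22 a b q) (-(b-a-2)/2) ((b^2 - (a+2)^2)/4 + q) c22"
  using expansion2_X11 expansion2_X12 expansion2_X21 expansion2_X22 by metis

lemma expansion2_second_subleading:
  obtains d0 d1 d2 u1 u2 v1 v2 w1 w2
  where "expansion2 (Y12 a b q) d0 d1 d2"
    and "expansion2 (Y11_div_n a b q) (-1/4) u1 u2"
    and "expansion2 (Y21_div_n a b q) 0 w1 w2"
    and "expansion2 (Y22_div_n a b q) (-1/4) v1 v2"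
  using expansion2_Y12 expansion2_Y11_div_n expansion2_Y21_div_n expansion2_Y22_div_n by metis

section \<open>The recurrence coefficients\<close>

lemma recurrence_mcoeff:
  assumes rec: "\<And>x. x *\<^sub>R mpeval (P n) x = mpeval (P (Suc n)) x + B ** mpeval (P n) x
                 + C ** (if n = 0 then 0 else mpeval (P (n - 1)) x)"
    and monic: "\<And>k. monic_mpoly k (P k)" and n: "n \<ge> 1"
  shows "B = mcoeff (P n) (n-1) - mcoeff (P (Suc n)) n"
    and "n \<ge> 2 \<Longrightarrow> C = mcoeff (P n) (n-2) - mcoeff (P (Suc n)) (n-1) - B ** mcoeff (P n) (n-1)"
proof -
  define XP where "XP = (\<chi> i j. [:0,1:] * P n $ i $ j)"
  have "mpeval XP x = x *\<^sub>R mpeval (P n) x" for x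
    by (simp add: XP_def mpeval_def vec_eq_iff)
  then have "mpeval XP x = mpeval (P (Suc n) + const_mpoly B ** P n + const_mpoly C ** P (n-1)) x" for x
    unfolding rec mpeval_add mpeval_mult mpeval_const_mpoly using n by simp
  then have XP: "XP = P (Suc n) + const_mpoly B ** P n + const_mpoly C ** P (n-1)"
    by (rule mpeval_inject)
  have shift: "mcoeff XP (Suc m) = mcoeff (P n) m" for m
    by (simp add: XP_def mcoeff_def vec_eq_iff)
  have "mcoeff (P (n-1)) n = 0"
    using monic_mpoly_mdegree_less[OF monic[of "n-1"]] n unfolding mdegree_less_def by simp
  with shift[of "n-1"] n show "B = mcoeff (P n) (n-1) - mcoeff (P (Suc n)) n"
    unfolding XP mcoeff_add mcoeff_const_mpoly_mult by (simp add: monic_mpoly_mcoeff[OF monic] eq_diff_eq add_ac)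
  assume "n \<ge> 2"
  then have "Suc (n-2) = n-1" by arith
  with shift[of "n-2"] show "C = mcoeff (P n) (n-2) - mcoeff (P (Suc n)) (n-1) - B ** mcoeff (P n) (n-1)"
    unfolding XP mcoeff_add mcoeff_const_mpoly_mult by (simp add: monic_mpoly_mcoeff[OF monic] eq_diff_eq add_ac)
qed

lemma norm_mat2_le: "norm (M :: real^2^2) \<le> \<bar>M$1$1\<bar> + \<bar>M$1$2\<bar> + \<bar>M$2$1\<bar> + \<bar>M$2$2\<bar>"
proof -
  have "norm M \<le> (\<Sum>i\<in>UNIV. norm (M$i))" unfolding norm_vec_def by (rule L2_set_le_sum) simp
  also have "\<dots> \<le> (\<bar>M$1$1\<bar> + \<bar>M$1$2\<bar>) + (\<bar>M$2$1\<bar> + \<bar>M$2$2\<bar>)"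
    using norm_le_l1_cart[of "M$1"] norm_le_l1_cart[of "M$2"] by (simp add: sum_2)
  finally show ?thesis by simp
qed

lemma norm_mat2_bigo:
  fixes M :: "'a \<Rightarrow> real^2^2"
  assumes "(\<lambda>n. M n $ 1 $ 1) \<in> O[F](g)" "(\<lambda>n. M n $ 1 $ 2) \<in> O[F](g)"
    and "(\<lambda>n. M n $ 2 $ 1) \<in> O[F](g)" "(\<lambda>n. M n $ 2 $ 2) \<in> O[F](g)"
  shows "(\<lambda>n. norm (M n)) \<in> O[F](g)"
proof -
  have "(\<lambda>n. norm (M n)) \<in> O[F](\<lambda>n. \<bar>M n$1$1\<bar> + \<bar>M n$1$2\<bar> + \<bar>M n$2$1\<bar> + \<bar>M n$2$2\<bar>)"
    by (rule landau_o.big_mono) (simp add: norm_mat2_le)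
  also have "(\<lambda>n. \<bar>M n$1$1\<bar> + \<bar>M n$1$2\<bar> + \<bar>M n$2$1\<bar> + \<bar>M n$2$2\<bar>) \<in> O[F](g)"
    using assms by (intro sum_in_bigo) simp_all
  finally show ?thesis .
qed

lemma mat2_mult_bigo:
  fixes A X :: "'a \<Rightarrow> real^2^2"
  assumes "\<And>i k. (\<lambda>n. A n $ i $ k) \<in> O[F](g)" and "\<And>k j. (\<lambda>n. X n $ k $ j) \<in> O[F](\<lambda>_. 1)"
  shows "(\<lambda>n. (A n ** X n) $ i $ j) \<in> O[F](g)"
proof -
  have "(\<lambda>n. A n $ i $ k * X n $ k $ j) \<in> O[F](g)" for k
    using landau_o.big.mult[OF assms] by simp
  from sum_in_bigo(1)[OF this this] show ?thesis by (simp add: matrix_matrix_mult_def sum_2)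
qed

lemma bigo_eventually_eq: "f \<in> O[F](h) \<Longrightarrow> eventually (\<lambda>n. f n = g n) F \<Longrightarrow> g \<in> O[F](h)"
  using landau_o.big.in_cong by blast

locale matrix_jacobi_mops =
  fixes a b p :: real and P :: "nat \<Rightarrow> real poly^2^2" and B C :: "nat \<Rightarrow> real^2^2"
  assumes a: "a > -1" and b: "b > -1" and p: "p > 0"
    and mops: "is_monic_MOPS (weightW a b p) P"
    and recurrence: "\<And>n x. x *\<^sub>R mpeval (P n) x = mpeval (P (Suc n)) x + B n ** mpeval (P n) x
                         + C n ** (if n = 0 then 0 else mpeval (P (n - 1)) x)"
begin

definition q :: real where "q = (a+1)/(1+p)"

lemma a_eq: "a = q*(p+1) - 1" and q_pos: "q > 0" and q_less: "q < a + 1"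
proof -
  have "1 + p > 1" and "(a+1) * p > 0" using a p by simp_all
  then show "a = q*(p+1) - 1" "q > 0" "q < a + 1"
    unfolding q_def using a by (simp_all add: field_simps algebra_simps)
qed

lemma monic: "monic_mpoly n (P n)"
  using mops unfolding is_monic_MOPS_def by blast

lemma eigen: "diff_op a b q (P n) = const_mpoly (eigenvalue_matrix a b q n) ** P n"
  by (rule monic_mops_eigen[OF mops a_eq a b p])

lemma subleading_coeff:
  assumes "n \<ge> 1"
  shows "mcoeff (P n) (n-1) = vector [vector [X11 a b q n, X12 a q n], vector [X21 a b q n, X22 a b q n]]"
proof -
  obtain k where n: "n = Suc k" using assms by (cases n) auto
  show ?thesis
    using subleading_coeff_solution[OF a b q_pos q_less _ subleading_coeff_eqs[OF eigen monic, of k]]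
    unfolding n by (simp add: vec_eq_iff forall_2)
qed

lemma second_subleading_coeff:
  assumes "n \<ge> 2"
  shows "mcoeff (P n) (n-2) = vector [vector [real n * Y11_div_n a b q n, Y12 a b q n],
                                     vector [real n * Y21_div_n a b q n, real n * Y22_div_n a b q n]]"
proof -
  obtain k where n: "n = Suc (Suc k)" using assms by (metis add_2_eq_Suc le_Suc_ex)
  have X: "mcoeff (P (Suc (Suc k))) (Suc k) $ 1 $ 1 = X11 a b q (Suc (Suc k))"
    "mcoeff (P (Suc (Suc k))) (Suc k) $ 1 $ 2 = X12 a q (Suc (Suc k))"
    "mcoeff (P (Suc (Suc k))) (Suc k) $ 2 $ 1 = X21 a b q (Suc (Suc k))"
    "mcoeff (P (Suc (Suc k))) (Suc k) $ 2 $ 2 = X22 a b q (Suc (Suc k))"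
    using subleading_coeff[of "Suc (Suc k)"] by simp_all
  show ?thesis
    using second_subleading_coeff_solution[OF a b q_pos q_less _
        second_subleading_coeff_eqs[OF eigen monic, of k, unfolded X]]
    unfolding n by (simp add: vec_eq_iff forall_2)
qed

lemma B_eq: "n \<ge> 1 \<Longrightarrow> B n = mcoeff (P n) (n-1) - mcoeff (P (Suc n)) n"
  by (rule recurrence_mcoeff(1)[OF recurrence monic])

lemma C_eq:
  "n \<ge> 2 \<Longrightarrow> C n = mcoeff (P n) (n-2) - mcoeff (P (Suc n)) (n-1) - B n ** mcoeff (P n) (n-1)"
  by (rule recurrence_mcoeff(2)[OF recurrence monic]) simp_all

lemma B_entries:
  assumes "n \<ge> 1"
  shows "B n $ 1 $ 1 = X11 a b q n - X11 a b q (Suc n)" "B n $ 1 $ 2 = X12 a q n - X12 a q (Suc n)"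
    "B n $ 2 $ 1 = X21 a b q n - X21 a b q (Suc n)" "B n $ 2 $ 2 = X22 a b q n - X22 a b q (Suc n)"
  using subleading_coeff[OF assms] subleading_coeff[of "Suc n"] by (simp_all add: B_eq[OF assms])

lemma C_entries:
  assumes n: "n \<ge> 2"
  defines "BX \<equiv> B n ** mcoeff (P n) (n-1)"
  shows "C n $ 1 $ 1 = real n * Y11_div_n a b q n - real (Suc n) * Y11_div_n a b q (Suc n) - BX $ 1 $ 1"
    "C n $ 1 $ 2 = Y12 a b q n - Y12 a b q (Suc n) - BX $ 1 $ 2"
    "C n $ 2 $ 1 = real n * Y21_div_n a b q n - real (Suc n) * Y21_div_n a b q (Suc n) - BX $ 2 $ 1"
    "C n $ 2 $ 2 = real n * Y22_div_n a b q n - real (Suc n) * Y22_div_n a b q (Suc n) - BX $ 2 $ 2"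
  using second_subleading_coeff[OF n] second_subleading_coeff[of "Suc n"] n
  unfolding BX_def by (simp_all add: C_eq[OF n] numeral_2_eq_2)

lemma B_asymptotics:
  "(\<lambda>n. norm (B n - (1 / real n ^ 2) *\<^sub>R
      ((1/4) *\<^sub>R vector [vector [(b+1)^2 - a^2, 0], vector [0, b^2 - (a+2)^2]]
       - ((a+1)/(1+p)) *\<^sub>R vector [vector [1, 2*p], vector [1/2, -1]])))
     \<in> O(\<lambda>n. 1 / real n ^ 3)"
proof -
  obtain c11 c12 c21 c22
    where X11: "expansion2 (X11 a b q) (-(b-a+1)/2) (((b+1)^2 - a^2)/4 - q) c11"
      and X12: "expansion2 (X12 a q) 2 (-2*(a+1-q)) c12"
      and X21: "expansion2 (X21 a b q) 0 (-q/2) c21"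
      and X22: "expansion2 (X22 a b q) (-(b-a-2)/2) ((b^2 - (a+2)^2)/4 + q) c22"
    by (rule expansion2_subleading)
  define K :: "real^2^2" where "K = (1/4) *\<^sub>R vector [vector [(b+1)^2 - a^2, 0], vector [0, b^2 - (a+2)^2]]
       - ((a+1)/(1+p)) *\<^sub>R vector [vector [1, 2*p], vector [1/2, -1]]"
  have "1 + p \<noteq> 0" using p by simp
  then have K: "K$1$1 = ((b+1)^2 - a^2)/4 - q" "K$1$2 = -2*(a+1-q)" "K$2$1 = -q/2"
    "K$2$2 = (b^2 - (a+2)^2)/4 + q"
    unfolding K_def q_def by (simp_all add: field_simps)
  have ev: "\<forall>\<^sub>F n in sequentially. n \<ge> 1" by (rule eventually_ge_at_top)
  have "(\<lambda>n. (B n - (1 / real n ^ 2) *\<^sub>R K) $ 1 $ 1) \<in> O(\<lambda>n. 1 / real n ^ 3)"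
    and "(\<lambda>n. (B n - (1 / real n ^ 2) *\<^sub>R K) $ 1 $ 2) \<in> O(\<lambda>n. 1 / real n ^ 3)"
    and "(\<lambda>n. (B n - (1 / real n ^ 2) *\<^sub>R K) $ 2 $ 1) \<in> O(\<lambda>n. 1 / real n ^ 3)"
    and "(\<lambda>n. (B n - (1 / real n ^ 2) *\<^sub>R K) $ 2 $ 2) \<in> O(\<lambda>n. 1 / real n ^ 3)"
    by (rule bigo_eventually_eq[OF expansion2_forward_difference eventually_mono[OF ev]],
        rule X11 X12 X21 X22, simp add: B_entries K)+
  then show ?thesis unfolding K_def[symmetric] by (rule norm_mat2_bigo)
qed

lemma B_entries_bigo: "(\<lambda>n. B n $ i $ j) \<in> O(\<lambda>n. 1 / real n ^ 2)"
proof -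
  obtain c11 c12 c21 c22
    where X11: "expansion2 (X11 a b q) (-(b-a+1)/2) (((b+1)^2 - a^2)/4 - q) c11"
      and X12: "expansion2 (X12 a q) 2 (-2*(a+1-q)) c12"
      and X21: "expansion2 (X21 a b q) 0 (-q/2) c21"
      and X22: "expansion2 (X22 a b q) (-(b-a-2)/2) ((b^2 - (a+2)^2)/4 + q) c22"
    by (rule expansion2_subleading)
  have "(\<lambda>n. B n $ 1 $ 1) \<in> O(\<lambda>n. 1 / real n ^ 2)" "(\<lambda>n. B n $ 1 $ 2) \<in> O(\<lambda>n. 1 / real n ^ 2)"
    "(\<lambda>n. B n $ 2 $ 1) \<in> O(\<lambda>n. 1 / real n ^ 2)" "(\<lambda>n. B n $ 2 $ 2) \<in> O(\<lambda>n. 1 / real n ^ 2)"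
    by (rule bigo_eventually_eq[OF expansion2_difference eventually_mono[OF eventually_ge_at_top[of 1]]],
        rule X11 X12 X21 X22, simp add: B_entries)+
  then show ?thesis using exhaust_2[of i] exhaust_2[of j] by auto
qed

lemma subleading_coeff_bounded: "(\<lambda>n. mcoeff (P n) (n-1) $ i $ j) \<in> O(\<lambda>_. 1)"
proof -
  obtain c11 c12 c21 c22
    where X11: "expansion2 (X11 a b q) (-(b-a+1)/2) (((b+1)^2 - a^2)/4 - q) c11"
      and X12: "expansion2 (X12 a q) 2 (-2*(a+1-q)) c12"
      and X21: "expansion2 (X21 a b q) 0 (-q/2) c21"
      and X22: "expansion2 (X22 a b q) (-(b-a-2)/2) ((b^2 - (a+2)^2)/4 + q) c22"
    by (rule expansion2_subleading)
  have "(\<lambda>n. mcoeff (P n) (n-1) $ 1 $ 1) \<in> O(\<lambda>_. 1)" "(\<lambda>n. mcoeff (P n) (n-1) $ 1 $ 2) \<in> O(\<lambda>_. 1)"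
    "(\<lambda>n. mcoeff (P n) (n-1) $ 2 $ 1) \<in> O(\<lambda>_. 1)" "(\<lambda>n. mcoeff (P n) (n-1) $ 2 $ 2) \<in> O(\<lambda>_. 1)"
    by (rule bigo_eventually_eq[OF expansion2_bounded eventually_mono[OF eventually_ge_at_top[of 1]]],
        rule X11 X12 X21 X22, simp add: subleading_coeff[simplified])+
  then show ?thesis using exhaust_2[of i] exhaust_2[of j] by auto
qed

lemma C_asymptotics: "(\<lambda>n. norm (C n - (1/4) *\<^sub>R mat 1)) \<in> O(\<lambda>n. 1 / real n ^ 2)"
proof -
  obtain d0 d1 d2 u1 u2 v1 v2 w1 w2
    where Y12: "expansion2 (Y12 a b q) d0 d1 d2"
      and Y11: "expansion2 (Y11_div_n a b q) (-1/4) u1 u2"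
      and Y21: "expansion2 (Y21_div_n a b q) 0 w1 w2"
      and Y22: "expansion2 (Y22_div_n a b q) (-1/4) v1 v2"
    by (rule expansion2_second_subleading)
  have BX: "(\<lambda>n. (B n ** mcoeff (P n) (n-1)) $ i $ j) \<in> O(\<lambda>n. 1 / real n ^ 2)" for i j
    using B_entries_bigo subleading_coeff_bounded by (rule mat2_mult_bigo)
  have ev: "\<forall>\<^sub>F n in sequentially. n \<ge> 2" by (rule eventually_ge_at_top)
  have "(\<lambda>n. (C n - (1/4) *\<^sub>R mat 1) $ 1 $ 1) \<in> O(\<lambda>n. 1 / real n ^ 2)"
    and "(\<lambda>n. (C n - (1/4) *\<^sub>R mat 1) $ 2 $ 1) \<in> O(\<lambda>n. 1 / real n ^ 2)"
    and "(\<lambda>n. (C n - (1/4) *\<^sub>R mat 1) $ 2 $ 2) \<in> O(\<lambda>n. 1 / real n ^ 2)"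
    by (rule bigo_eventually_eq[OF sum_in_bigo(2)[OF expansion2_weighted_difference BX]
          eventually_mono[OF ev]], rule Y11 Y21 Y22, simp add: C_entries mat_def)+
  moreover have "(\<lambda>n. (C n - (1/4) *\<^sub>R mat 1) $ 1 $ 2) \<in> O(\<lambda>n. 1 / real n ^ 2)"
    by (rule bigo_eventually_eq[OF sum_in_bigo(2)[OF expansion2_difference[OF Y12] BX]
          eventually_mono[OF ev]])
      (simp add: C_entries mat_def)
  ultimately show ?thesis by (intro norm_mat2_bigo)
qed

end

theorem corollary2p4:
  fixes \<alpha> \<beta> p :: real and P :: "nat \<Rightarrow> real poly ^2^2" and B C :: "nat \<Rightarrow> real^2^2"
  assumes "\<alpha> > -1" "\<beta> > -1" "p > 0"
    and "is_monic_MOPS (weightW \<alpha> \<beta> p) P"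
    and "\<And>n x. x *\<^sub>R mpeval (P n) x = mpeval (P (Suc n)) x + B n ** mpeval (P n) x
                 + C n ** (if n = 0 then 0 else mpeval (P (n - 1)) x)"
  shows "(\<lambda>n. norm (B n - (1 / real n ^ 2) *\<^sub>R
            ((1/4) *\<^sub>R vector [vector [(\<beta>+1)^2 - \<alpha>^2, 0], vector [0, \<beta>^2 - (\<alpha>+2)^2]]
             - ((\<alpha>+1)/(1+p)) *\<^sub>R vector [vector [1, 2*p], vector [1/2, -1]])))
           \<in> O(\<lambda>n. 1 / real n ^ 3) \<and>
         (\<lambda>n. norm (C n - (1/4) *\<^sub>R mat 1)) \<in> O(\<lambda>n. 1 / real n ^ 2)"
proof -
  interpret matrix_jacobi_mops \<alpha> \<beta> p P B C
    using assms by unfold_locales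
  show ?thesis using B_asymptotics C_asymptotics ..
qed

end
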